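(* Let $\mathcal{D}$ be a dataset in normal form and $\Pi$ a consistent DatalogMTL program. Then $\mathcal{R}$ is an $s$-repair of $\mathcal{D}$ w.r.t. $\Pi$ if and only if $\mathcal{R}$ is a $\subseteq$-maximal $\Pi$-consistent subset of $\mathcal{D}$; and $\mathcal{C}$ is an $s$-conflict of $\mathcal{D}$ w.r.t. $\Pi$ if and only if $\mathcal{C}$ is a $\subseteq$-minimal $\Pi$-inconsistent subset of $\mathcal{D}$.
   Context: DatalogMTL programs, datasets (finite sets of facts $\alpha@\iota$ with $\alpha$ a ground atom and $\iota$ a non-empty interval of the timeline), models, $\Pi$-consistency (existence of a common model of the facts and of $\Pi$) and entailment are as usual. A set of facts is in normal form if it contains no two distinct facts $\alpha@\iota_1,\alpha@\iota_2$ with the same atom such that $\iota_1\cup\iota_2$ (as a set of timepoints) is the set of timepoints of an interval. For sets of facts $\mathcal{B},\mathcal{B}'$: $\mathcal{B}'\sqsubseteq^p\mathcal{B}$ if $\mathcal{B}\models\alpha@\iota'$ for every $\alpha@\iota'\in\mathcal{B}'$; $\mathcal{B}'\sqsubseteq^i\mathcal{B}$ if $\mathcal{B}'\sqsubseteq^p\mathcal{B}$ and for every $\alpha@\iota\in\mathcal{B}$ there is at most one $\alpha@\iota'\in\mathcal{B}'$ with $\iota'\subseteq\iota$; $\mathcal{B}'\sqsubseteq^s\mathcal{B}$ if $\mathcal{B}'\subseteq\mathcal{B}$ and $\mathcal{B}'\sqsubseteq^i\mathcal{B}$; $\mathcal{B}'\sqsubset^s\mathcal{B}$ if $\mathcal{B}'\sqsubseteq^s\mathcal{B}$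 and not $\mathcal{B}\sqsubseteq^s\mathcal{B}'$. An $s$-repair of $\mathcal{D}$ w.r.t. $\Pi$ is a set $\mathcal{R}$ in normal form, $\Pi$-consistent, with $\mathcal{R}\sqsubseteq^s\mathcal{D}$, such that there is no $\Pi$-consistent $\mathcal{R}'$ with $\mathcal{R}\sqsubset^s\mathcal{R}'\sqsubseteq^s\mathcal{D}$. An $s$-conflict of $\mathcal{D}$ w.r.t. $\Pi$ is a set $\mathcal{C}$ in normal form, $\Pi$-inconsistent, with $\mathcal{C}\sqsubseteq^s\mathcal{D}$, such that there is no $\Pi$-inconsistent $\mathcal{C}'$ with $\mathcal{C}'\sqsubset^s\mathcal{C}$. *)

theory Defs
  imports Main "HOL.Rat"
begin

datatype ebound = NInf | Fin rat | PInf

datatype interval = Ivl ebound bool ebound bool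
  (* left endpoint, left endpoint included?, right endpoint, right endpoint included? *)

fun lower_ok :: "ebound \<Rightarrow> bool \<Rightarrow> rat \<Rightarrow> bool" where
  "lower_ok NInf _ t = True"
| "lower_ok (Fin a) c t = (if c then a \<le> t else a < t)"
| "lower_ok PInf _ t = False"

fun upper_ok :: "ebound \<Rightarrow> bool \<Rightarrow> rat \<Rightarrow> bool" where
  "upper_ok PInf _ t = True"
| "upper_ok (Fin a) c t = (if c then t \<le> a else t < a)"
| "upper_ok NInf _ t = False"

fun ivl_set :: "interval \<Rightarrow> rat set" where
  "ivl_set (Ivl l lc r rc) = {t. lower_ok l lc t \<and> upper_ok r rc t}"

definition is_interval :: "rat set \<Rightarrow> bool" where
  "is_interval S \<longleftrightarrow> (\<exists>\<iota>. S = ivl_set \<iota>)"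

datatype ('c,'v) trm = Var 'v | Cst 'c

datatype ('p,'c,'v) mtl =
    Top
  | Bot
  | Atm 'p "('c,'v) trm list"
  | BoxM interval "('p,'c,'v) mtl"
  | BoxP interval "('p,'c,'v) mtl"
  | DiaM interval "('p,'c,'v) mtl"
  | DiaP interval "('p,'c,'v) mtl"
  | Since interval "('p,'c,'v) mtl" "('p,'c,'v) mtl"
  | Until interval "('p,'c,'v) mtl" "('p,'c,'v) mtl"

type_synonym ('p,'c,'v) rule = "('p,'c,'v) mtl list \<times> ('p,'c,'v) mtl"

fun trm_vars :: "('c,'v) trm \<Rightarrow> 'v set" where
  "trm_vars (Var x) = {x}"
| "trm_vars (Cst c) = {}"

fun fvars :: "('p,'c,'v) mtl \<Rightarrow> 'v set" where
  "fvars Top = {}"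
| "fvars Bot = {}"
| "fvars (Atm P ts) = (\<Union>t\<in>set ts. trm_vars t)"
| "fvars (BoxM \<rho> f) = fvars f"
| "fvars (BoxP \<rho> f) = fvars f"
| "fvars (DiaM \<rho> f) = fvars f"
| "fvars (DiaP \<rho> f) = fvars f"
| "fvars (Since \<rho> f g) = fvars f \<union> fvars g"
| "fvars (Until \<rho> f g) = fvars f \<union> fvars g"

fun rho_ok :: "('p,'c,'v) mtl \<Rightarrow> bool" where
  "rho_ok Top = True"
| "rho_ok Bot = True"
| "rho_ok (Atm P ts) = True"
| "rho_ok (BoxM \<rho> f) = (ivl_set \<rho> \<subseteq> {0..} \<and> rho_ok f)"
| "rho_ok (BoxP \<rho> f) = (ivl_set \<rho> \<subseteq> {0..} \<and> rho_ok f)"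
| "rho_ok (DiaM \<rho> f) = (ivl_set \<rho> \<subseteq> {0..} \<and> rho_ok f)"
| "rho_ok (DiaP \<rho> f) = (ivl_set \<rho> \<subseteq> {0..} \<and> rho_ok f)"
| "rho_ok (Since \<rho> f g) = (ivl_set \<rho> \<subseteq> {0..} \<and> rho_ok f \<and> rho_ok g)"
| "rho_ok (Until \<rho> f g) = (ivl_set \<rho> \<subseteq> {0..} \<and> rho_ok f \<and> rho_ok g)"

fun head_ok :: "('p,'c,'v) mtl \<Rightarrow> bool" where
  "head_ok Top = True"
| "head_ok Bot = True"
| "head_ok (Atm P ts) = True"
| "head_ok (BoxM \<rho> f) = head_ok f"
| "head_ok (BoxP \<rho> f) = head_ok f"
| "head_ok _ = False"

definition rule_ok :: "('p,'c,'v) rule \<Rightarrow> bool" where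
  "rule_ok r \<longleftrightarrow> fst r \<noteq> [] \<and> head_ok (snd r) \<and> rho_ok (snd r)
     \<and> (\<forall>b\<in>set (fst r). rho_ok b)
     \<and> fvars (snd r) \<subseteq> (\<Union>b\<in>set (fst r). fvars b)"

definition program :: "('p,'c,'v) rule set \<Rightarrow> bool" where
  "program \<Pi> \<longleftrightarrow> finite \<Pi> \<and> (\<forall>r\<in>\<Pi>. rule_ok r)"

text \<open>A ground atom is a predicate applied to constants; a fact is a ground atom
  together with (the set of timepoints of) an interval.\<close>
type_synonym ('p,'c) gatom = "'p \<times> 'c list"
type_synonym ('p,'c) fact = "('p,'c) gatom \<times> rat set"

definition dataset :: "('p,'c) fact set \<Rightarrow> bool" where
  "dataset D \<longleftrightarrow> finite D \<and> (\<forall>(\<alpha>,S)\<in>D. S \<noteq> {} \<and> is_interval S)"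

type_synonym ('p,'c) interp = "rat \<Rightarrow> ('p,'c) gatom set"

fun trm_inst :: "('v \<Rightarrow> 'c) \<Rightarrow> ('c,'v) trm \<Rightarrow> 'c" where
  "trm_inst \<sigma> (Var x) = \<sigma> x"
| "trm_inst \<sigma> (Cst c) = c"

fun sat :: "('p,'c) interp \<Rightarrow> rat \<Rightarrow> ('v \<Rightarrow> 'c) \<Rightarrow> ('p,'c,'v) mtl \<Rightarrow> bool" where
  "sat M t \<sigma> Top = True"
| "sat M t \<sigma> Bot = False"
| "sat M t \<sigma> (Atm P ts) = ((P, map (trm_inst \<sigma>) ts) \<in> M t)"
| "sat M t \<sigma> (BoxM \<rho> f) = (\<forall>s. t - s \<in> ivl_set \<rho> \<longrightarrow> sat M s \<sigma> f)"
| "sat M t \<sigma> (BoxP \<rho> f) = (\<forall>s. s - t \<in> ivl_set \<rho> \<longrightarrow> sat M s \<sigma> f)"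
| "sat M t \<sigma> (DiaM \<rho> f) = (\<exists>s. t - s \<in> ivl_set \<rho> \<and> sat M s \<sigma> f)"
| "sat M t \<sigma> (DiaP \<rho> f) = (\<exists>s. s - t \<in> ivl_set \<rho> \<and> sat M s \<sigma> f)"
| "sat M t \<sigma> (Since \<rho> f g) = (\<exists>s. t - s \<in> ivl_set \<rho> \<and> sat M s \<sigma> g
      \<and> (\<forall>r. s < r \<and> r < t \<longrightarrow> sat M r \<sigma> f))"
| "sat M t \<sigma> (Until \<rho> f g) = (\<exists>s. s - t \<in> ivl_set \<rho> \<and> sat M s \<sigma> g
      \<and> (\<forall>r. t < r \<and> r < s \<longrightarrow> sat M r \<sigma> f))"

definition models_rule :: "('p,'c) interp \<Rightarrow> ('p,'c,'v) rule \<Rightarrow> bool" where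
  "models_rule M r \<longleftrightarrow> (\<forall>\<sigma> t. (\<forall>b\<in>set (fst r). sat M t \<sigma> b) \<longrightarrow> sat M t \<sigma> (snd r))"

definition models_prog :: "('p,'c) interp \<Rightarrow> ('p,'c,'v) rule set \<Rightarrow> bool" where
  "models_prog M \<Pi> \<longleftrightarrow> (\<forall>r\<in>\<Pi>. models_rule M r)"

definition models_fact :: "('p,'c) interp \<Rightarrow> ('p,'c) fact \<Rightarrow> bool" where
  "models_fact M f \<longleftrightarrow> (\<forall>t\<in>snd f. fst f \<in> M t)"

definition models_facts :: "('p,'c) interp \<Rightarrow> ('p,'c) fact set \<Rightarrow> bool" where
  "models_facts M B \<longleftrightarrow> (\<forall>f\<in>B. models_fact M f)"

definition consistent :: "('p,'c,'v) rule set \<Rightarrow> ('p,'c) fact set \<Rightarrow> bool" where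
  "consistent \<Pi> B \<longleftrightarrow> (\<exists>M. models_prog M \<Pi> \<and> models_facts M B)"

definition prog_consistent :: "('p,'c,'v) rule set \<Rightarrow> bool" where
  "prog_consistent \<Pi> \<longleftrightarrow> (\<exists>M. models_prog M \<Pi>)"

definition entails :: "('p,'c) fact set \<Rightarrow> ('p,'c) fact \<Rightarrow> bool" where
  "entails B f \<longleftrightarrow> (\<forall>M. models_facts M B \<longrightarrow> models_fact M f)"

definition normal_form :: "('p,'c) fact set \<Rightarrow> bool" where
  "normal_form B \<longleftrightarrow> \<not> (\<exists>\<alpha> S1 S2. (\<alpha>,S1) \<in> B \<and> (\<alpha>,S2) \<in> B \<and> S1 \<noteq> S2
      \<and> is_interval (S1 \<union> S2))"

definition le_p :: "('p,'c) fact set \<Rightarrow> ('p,'c) fact set \<Rightarrow> bool" where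
  "le_p B' B \<longleftrightarrow> (\<forall>f\<in>B'. entails B f)"

definition le_i :: "('p,'c) fact set \<Rightarrow> ('p,'c) fact set \<Rightarrow> bool" where
  "le_i B' B \<longleftrightarrow> le_p B' B \<and>
     (\<forall>(\<alpha>,S)\<in>B. \<forall>S1 S2. (\<alpha>,S1) \<in> B' \<and> S1 \<subseteq> S \<and> (\<alpha>,S2) \<in> B' \<and> S2 \<subseteq> S \<longrightarrow> S1 = S2)"

definition le_s :: "('p,'c) fact set \<Rightarrow> ('p,'c) fact set \<Rightarrow> bool" where
  "le_s B' B \<longleftrightarrow> B' \<subseteq> B \<and> le_i B' B"

definition lt_s :: "('p,'c) fact set \<Rightarrow> ('p,'c) fact set \<Rightarrow> bool" where
  "lt_s B' B \<longleftrightarrow> le_s B' B \<and> \<not> le_s B B'"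

definition s_repair :: "('p,'c,'v) rule set \<Rightarrow> ('p,'c) fact set \<Rightarrow> ('p,'c) fact set \<Rightarrow> bool" where
  "s_repair \<Pi> D R \<longleftrightarrow> normal_form R \<and> consistent \<Pi> R \<and> le_s R D \<and>
     \<not> (\<exists>R'. consistent \<Pi> R' \<and> lt_s R R' \<and> le_s R' D)"

definition s_conflict :: "('p,'c,'v) rule set \<Rightarrow> ('p,'c) fact set \<Rightarrow> ('p,'c) fact set \<Rightarrow> bool" where
  "s_conflict \<Pi> D C \<longleftrightarrow> normal_form C \<and> \<not> consistent \<Pi> C \<and> le_s C D \<and>
     \<not> (\<exists>C'. \<not> consistent \<Pi> C' \<and> lt_s C' C)"

end

theory Submission
  imports Defs
begin

text \<open>On subsets of a dataset in normal form, \<open>\<sqsubseteq>\<^sup>s\<close> and \<open>\<sqsubset>\<^sup>s\<close> collapse to \<open>\<subseteq>\<close> and \<open>\<subset>\<close>: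
  a fact of \<open>B' \<subseteq> B\<close> contained in a different fact of \<open>B\<close> on the same atom would
  have an interval as union with it, against normal form.\<close>

lemma normal_form_subset: "normal_form D \<Longrightarrow> B \<subseteq> D \<Longrightarrow> normal_form B"
  unfolding normal_form_def by blast

lemma le_p_if_subset: "B' \<subseteq> B \<Longrightarrow> le_p B' B"
  by (auto simp: le_p_def entails_def models_facts_def)

lemma le_s_iff_subset:
  assumes nf: "normal_form B" and ivl: "\<forall>(\<alpha>, S)\<in>B. is_interval S"
  shows "le_s B' B \<longleftrightarrow> B' \<subseteq> B"
proof
  assume "le_s B' B"
  then show "B' \<subseteq> B" by (simp add: le_s_def)
next
  assume sub: "B' \<subseteq> B"
  have unique: "S1 = S" if "(\<alpha>, S) \<in> B" "(\<alpha>, S1) \<in> B'" "S1 \<subseteq> S" for \<alpha> S S1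
  proof (rule ccontr)
    assume "S1 \<noteq> S"
    moreover have "is_interval S"
      using that(1) ivl by fastforce
    then have "is_interval (S1 \<union> S)"
      using that(3) by (simp add: Un_absorb1)
    ultimately show False
      using nf that sub unfolding normal_form_def by blast
  qed
  have "le_i B' B"
    unfolding le_i_def using le_p_if_subset[OF sub] unique by blast
  with sub show "le_s B' B" by (simp add: le_s_def)
qed

lemma lt_s_iff_psubset:
  assumes nf: "normal_form B" and ivl: "\<forall>(\<alpha>, S)\<in>B. is_interval S"
  shows "lt_s B' B \<longleftrightarrow> B' \<subset> B"
proof -
  have "le_s B B' \<longleftrightarrow> B \<subseteq> B'" if "B' \<subseteq> B"
    using normal_form_subset[OF nf that] ivl that by (intro le_s_iff_subset) auto
  then show ?thesis
    unfolding lt_s_def le_s_iff_subset[OF nf ivl] by blast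
qed

locale normal_dataset =
  fixes D :: "('p, 'c) fact set"
  assumes normal_form: "normal_form D"
    and intervals: "\<forall>(\<alpha>, S)\<in>D. is_interval S"
begin

lemma le_s_iff_subset_of_subset: "B \<subseteq> D \<Longrightarrow> le_s B' B \<longleftrightarrow> B' \<subseteq> B"
  using normal_form_subset[OF normal_form] intervals by (intro le_s_iff_subset) auto

lemma lt_s_iff_psubset_of_subset: "B \<subseteq> D \<Longrightarrow> lt_s B' B \<longleftrightarrow> B' \<subset> B"
  using normal_form_subset[OF normal_form] intervals by (intro lt_s_iff_psubset) auto

lemma le_s_dataset_iff_subset: "le_s B D \<longleftrightarrow> B \<subseteq> D"
  by (simp add: le_s_iff_subset_of_subset)

lemma s_repair_iff_maximal_consistent_subset:
  "s_repair \<Pi> D R \<longleftrightarrow>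
     R \<subseteq> D \<and> consistent \<Pi> R \<and> (\<forall>R'. R \<subset> R' \<and> R' \<subseteq> D \<longrightarrow> \<not> consistent \<Pi> R')"
proof -
  have "consistent \<Pi> R' \<and> lt_s R R' \<and> R' \<subseteq> D \<longleftrightarrow> R \<subset> R' \<and> R' \<subseteq> D \<and> consistent \<Pi> R'"
    for R'
    by (cases "R' \<subseteq> D") (auto simp: lt_s_iff_psubset_of_subset)
  then have "s_repair \<Pi> D R \<longleftrightarrow> normal_form R \<and> consistent \<Pi> R \<and> R \<subseteq> D \<and>
      \<not> (\<exists>R'. R \<subset> R' \<and> R' \<subseteq> D \<and> consistent \<Pi> R')"
    unfolding s_repair_def le_s_dataset_iff_subset by simp
  then show ?thesis
    using normal_form_subset[OF normal_form] by blast
qed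

lemma s_conflict_iff_minimal_inconsistent_subset:
  "s_conflict \<Pi> D C \<longleftrightarrow>
     C \<subseteq> D \<and> \<not> consistent \<Pi> C \<and> (\<forall>C'. C' \<subset> C \<longrightarrow> consistent \<Pi> C')"
proof -
  have "s_conflict \<Pi> D C \<longleftrightarrow> normal_form C \<and> \<not> consistent \<Pi> C \<and> C \<subseteq> D \<and>
      \<not> (\<exists>C'. C' \<subset> C \<and> \<not> consistent \<Pi> C')"
  proof (cases "C \<subseteq> D")
    case True
    then have "\<not> consistent \<Pi> C' \<and> lt_s C' C \<longleftrightarrow> C' \<subset> C \<and> \<not> consistent \<Pi> C'" for C'
      by (auto simp: lt_s_iff_psubset_of_subset)
    then show ?thesis
      unfolding s_conflict_def le_s_dataset_iff_subset by simp
  next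
    case False
    then show ?thesis
      by (simp add: s_conflict_def le_s_dataset_iff_subset)
  qed
  then show ?thesis
    using normal_form_subset[OF normal_form] by blast
qed

end

lemma normal_dataset_if_dataset: "dataset D \<Longrightarrow> normal_form D \<Longrightarrow> normal_dataset D"
  unfolding normal_dataset_def dataset_def by auto

theorem mainTheorem2:
  fixes D R C :: "('p,'c) fact set" and \<Pi> :: "('p,'c,'v) rule set"
  assumes "dataset D" and "normal_form D"
    and "program \<Pi>" and "prog_consistent \<Pi>"
  shows "(s_repair \<Pi> D R \<longleftrightarrow>
            (R \<subseteq> D \<and> consistent \<Pi> R \<and> (\<forall>R'. R \<subset> R' \<and> R' \<subseteq> D \<longrightarrow> \<not> consistent \<Pi> R')))
       \<and> (s_conflict \<Pi> D C \<longleftrightarrow>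
            (C \<subseteq> D \<and> \<not> consistent \<Pi> C \<and> (\<forall>C'. C' \<subset> C \<longrightarrow> consistent \<Pi> C')))"
proof -
  interpret normal_dataset D
    using normal_dataset_if_dataset assms(1,2) .
  show ?thesis
    by (intro conjI s_repair_iff_maximal_consistent_subset
        s_conflict_iff_minimal_inconsistent_subset)
qed

end
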